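(* Let $x\in(0,1)$ be irrational. Every principal convergent of the OOCF expansion of $x$ is an intermediate convergent of the regular continued fraction of $x$; that is, for every $k\ge1$ there exist $n\ge1$ and $1\le j\le d_n$ with $p_k/q_k=\frac{p^R_{n-2}+jp^R_{n-1}}{q^R_{n-2}+jq^R_{n-1}}$.
   Context: Regular continued fraction (RCF): $x=[0;d_1,d_2,\dots]=\cfrac{1}{d_1+\cfrac{1}{d_2+\cdots}}$, $d_j\in\mathbb N$; convergents $p^R_n/q^R_n$ defined by $p^R_{-1}=1$, $q^R_{-1}=0$, $p^R_0=0$, $q^R_0=1$, $p^R_n=d_np^R_{n-1}+p^R_{n-2}$, $q^R_n=d_nq^R_{n-1}+q^R_{n-2}$. Intermediate convergents: $\frac{p^R_{n-2}+jp^R_{n-1}}{q^R_{n-2}+jq^R_{n-1}}$ for $n\ge1$, $1\le j\le d_n$. OOCF: digits $D=\{(1,1)\}\cup\{(a,\varepsilon):a\ge2,\ \varepsilon=\pm1\}$; $B(k+1,-1)=[\frac{k-1}{k},\frac{2k-1}{2k+1}]$, $B(k,1)=[\frac{2k-1}{2k+1},\frac{k}{k+1}]$ ($k\ge1$); $T(x)=\frac{kx-(k-1)}{k-(k+1)x}$ on $B(k+1,-1)$, $T(x)=\frac{k-(k+1)x}{kx-(k-1)}$ on $B(k,1)$, $T(1)=1$. The OOCF expansion of irrational $x\in(0,1)$ is the unique sequence $(a_n,\varepsilon_n)\in D$ with $T^{n-1}(x)\in B(a_n,\varepsilon_n)$ for all $n\ge1$; its $k$-th principal convergent is $p_k/q_k=1-\cfrac{1}{a_1+\cfrac{\varepsilon_1}{2-\cfrac{1}{\ddots\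 \cfrac{\varepsilon_{k-1}}{2-\cfrac{1}{a_k+\varepsilon_k/2}}}}}$. *)

theory Defs
  imports Complex_Main
begin

definition gauss_map :: "real \<Rightarrow> real" where
  "gauss_map x = frac (1 / x)"

definition rcf_digit :: "real \<Rightarrow> nat \<Rightarrow> nat" where
  "rcf_digit x n = nat \<lfloor>1 / ((gauss_map ^^ (n - 1)) x)\<rfloor>"

text \<open>Shifted convergents: rcfP x m = p^R_(m-1), rcfQ x m = q^R_(m-1), for m >= 0.
  So rcfP x 0 = p^R_(-1) = 1, rcfP x 1 = p^R_0 = 0, and
  p^R_n = d_n p^R_(n-1) + p^R_(n-2).\<close>
fun rcfP :: "real \<Rightarrow> nat \<Rightarrow> int" where
  "rcfP x 0 = 1"
| "rcfP x (Suc 0) = 0"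
| "rcfP x (Suc (Suc n)) = int (rcf_digit x (Suc n)) * rcfP x (Suc n) + rcfP x n"

fun rcfQ :: "real \<Rightarrow> nat \<Rightarrow> int" where
  "rcfQ x 0 = 0"
| "rcfQ x (Suc 0) = 1"
| "rcfQ x (Suc (Suc n)) = int (rcf_digit x (Suc n)) * rcfQ x (Suc n) + rcfQ x n"

definition oocf_D :: "(nat \<times> int) set" where
  "oocf_D = {(1, 1)} \<union> {(a, e). a \<ge> 2 \<and> (e = 1 \<or> e = -1)}"

definition oocf_B :: "nat \<Rightarrow> int \<Rightarrow> real set" where
  "oocf_B a e =
     (if e = -1 then (let k = real a - 1 in {(k - 1) / k .. (2*k - 1) / (2*k + 1)})
      else (let k = real a in {(2*k - 1) / (2*k + 1) .. k / (k + 1)}))"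

text \<open>The OOCF map T.  At points lying in two cylinders the formulas agree,
  so choosing any admissible cylinder is harmless.\<close>
definition oocf_T :: "real \<Rightarrow> real" where
  "oocf_T x =
     (if x = 1 then 1 else
      (let (a, e) = (SOME (a, e). (a, e) \<in> oocf_D \<and> x \<in> oocf_B a e) in
       if e = -1 then (let k = real a - 1 in (k * x - (k - 1)) / (k - (k + 1) * x))
       else (let k = real a in (k - (k + 1) * x) / (k * x - (k - 1)))))"

definition oocf_digit :: "real \<Rightarrow> nat \<Rightarrow> nat \<times> int" where
  "oocf_digit x n = (THE d. d \<in> oocf_D \<and> (oocf_T ^^ (n - 1)) x \<in> oocf_B (fst d) (snd d))"

fun oocf_tail :: "real \<Rightarrow> nat \<Rightarrow> nat \<Rightarrow> real" where
  "oocf_tail x m 0 = real (fst (oocf_digit x m)) + real_of_int (snd (oocf_digit x m)) / 2"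
| "oocf_tail x m (Suc r) = real (fst (oocf_digit x m))
      + real_of_int (snd (oocf_digit x m)) / (2 - 1 / oocf_tail x (Suc m) r)"

definition oocf_conv :: "real \<Rightarrow> nat \<Rightarrow> real" where
  "oocf_conv x k = 1 - 1 / oocf_tail x 1 (k - 1)"

end

theory Submission
  imports Defs
begin

(*
  For x in B(a,e) we have x = psi(T x) with the inverse branch psi(t) = 1 - 1/(a + e/(1 + t)),
  and the OOCF convergents satisfy p_1/q_1 = psi(1) and p_(k+1)/q_(k+1) (x) = psi(p_k/q_k (T x)).
  Every branch is a composition of the maps z |-> 1/(m + z), which prepends the RCF digit m >= 1,
  and z |-> 1/(m + 1/z), which adds m to the first RCF digit:
    psi_(1,1)(t) = 1/(2 + t),        psi_(a,1)(t) = 1/(1 + 1/(a - 1 + 1/(1 + t))),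
    psi_(2,-1)(t) = 1/(2 + 1/t),     psi_(a,-1)(t) = 1/(1 + 1/(a - 2 + 1/(1 + 1/t))).
  Both maps send an intermediate convergent of z to one of the image of z, and 1 is an
  intermediate convergent (n = j = 1) of every irrational in (0,1); induction on k concludes.
*)

section \<open>Intermediate convergents of regular continued fractions\<close>

definition unit_irrational :: "real \<Rightarrow> bool" where
  "unit_irrational x \<longleftrightarrow> 0 < x \<and> x < 1 \<and> x \<notin> \<rat>"

definition rcf_interm_conv :: "real \<Rightarrow> nat \<Rightarrow> nat \<Rightarrow> real" where
  "rcf_interm_conv x n j =
     real_of_int (rcfP x (n - 1) + int j * rcfP x n) / real_of_int (rcfQ x (n - 1) + int j * rcfQ x n)"

definition is_rcf_interm_conv :: "real \<Rightarrow> real \<Rightarrow> bool" where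
  "is_rcf_interm_conv x r \<longleftrightarrow>
     (\<exists>n\<ge>1. \<exists>j. 1 \<le> j \<and> j \<le> rcf_digit x n \<and> r = rcf_interm_conv x n j)"

lemma unit_irrational_gauss_map:
  assumes "unit_irrational x" shows "unit_irrational (gauss_map x)"
proof -
  have "frac (1 / x) \<notin> \<rat>"
    using assms by (simp add: unit_irrational_def divide_inverse)
  then have "frac (1 / x) \<noteq> 0" by (metis Rats_0)
  then show ?thesis
    using \<open>frac (1 / x) \<notin> \<rat>\<close>
    by (simp add: unit_irrational_def gauss_map_def frac_lt_1 order_le_less)
qed

lemma unit_irrational_gauss_map_funpow:
  "unit_irrational x \<Longrightarrow> unit_irrational ((gauss_map ^^ n) x)"
  by (induction n) (auto simp: unit_irrational_gauss_map)

lemma rcf_digit_Suc: "n \<ge> 1 \<Longrightarrow> rcf_digit x (Suc n) = rcf_digit (gauss_map x) n"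
  unfolding rcf_digit_def by (cases n) (simp_all add: funpow_Suc_right del: funpow.simps)

lemma rcf_digit_1_decomp:
  assumes "unit_irrational x"
  shows "1 / x = real (rcf_digit x 1) + gauss_map x"
  using assms by (simp add: unit_irrational_def rcf_digit_def gauss_map_def frac_def)

lemma rcf_digit_ge_1:
  assumes "unit_irrational x" and "n \<ge> 1"
  shows "rcf_digit x n \<ge> 1"
proof -
  have "unit_irrational ((gauss_map ^^ (n - 1)) x)"
    using assms(1) by (rule unit_irrational_gauss_map_funpow)
  then have "1 < 1 / (gauss_map ^^ (n - 1)) x"
    by (simp add: unit_irrational_def)
  then have "\<lfloor>1 / (gauss_map ^^ (n - 1)) x\<rfloor> \<ge> 1"
    by (simp add: one_le_floor)
  then show ?thesis
    unfolding rcf_digit_def by linarith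
qed

lemma unit_irrational_prepend:
  assumes z: "unit_irrational z" and m: "m \<ge> 1"
  defines "x \<equiv> 1 / (real m + z)"
  shows "unit_irrational x" and "gauss_map x = z" and "rcf_digit x 1 = m"
proof -
  have z01: "0 < z" "z < 1" "z \<notin> \<rat>" using z by (auto simp: unit_irrational_def)
  have inv_x: "1 / x = real m + z" unfolding x_def using z01 m by simp
  have floor_inv_x: "\<lfloor>real m + z\<rfloor> = int m" using z01(1,2) by linarith
  show "gauss_map x = z" unfolding gauss_map_def frac_def inv_x floor_inv_x by simp
  show "rcf_digit x 1 = m" by (simp add: rcf_digit_def inv_x floor_inv_x)
  have "real m + z \<notin> \<rat>" using z01 by (simp add: Rats_add_iff)
  then show "unit_irrational x"
    using z01 m by (simp add: unit_irrational_def x_def divide_inverse inverse_less_1_iff)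
qed

lemma rcfQ_bounds:
  assumes "unit_irrational x"
  shows "rcfQ x n \<ge> 0" and "n \<ge> 1 \<Longrightarrow> rcfQ x n \<ge> 1"
proof -
  have "rcfQ x n \<ge> 0 \<and> rcfQ x (Suc n) \<ge> 1" for n
  proof (induction n)
    case (Suc n)
    have "int (rcf_digit x (Suc n)) \<ge> 1" using rcf_digit_ge_1[OF assms] by simp
    then have "int (rcf_digit x (Suc n)) * rcfQ x (Suc n) \<ge> 1"
      using Suc order_trans[OF _ mult_right_mono[of 1 "int (rcf_digit x (Suc n))"]] by simp
    then show ?case using Suc by simp
  qed simp
  then show "rcfQ x n \<ge> 0" and "n \<ge> 1 \<Longrightarrow> rcfQ x n \<ge> 1"
    by (auto simp: Suc_le_eq dest: gr0_implies_Suc)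
qed

lemma rcfP_rcfQ_gauss_map:
  "rcfP x (Suc i) = rcfQ (gauss_map x) i \<and>
   rcfQ x (Suc i) = int (rcf_digit x 1) * rcfQ (gauss_map x) i + rcfP (gauss_map x) i"
proof (induction i rule: less_induct)
  case (less i)
  consider "i = 0" | "i = 1" | n where "i = Suc (Suc n)"
    by (metis One_nat_def not0_implies_Suc)
  then show ?case
  proof cases
    case 3
    have "rcf_digit x (Suc (Suc n)) = rcf_digit (gauss_map x) (Suc n)"
      by (simp add: rcf_digit_Suc)
    with less[of n] less[of "Suc n"] show ?thesis
      unfolding 3 by (simp add: algebra_simps)
  qed simp_all
qed

lemma rcf_interm_conv_Suc:
  assumes x: "unit_irrational x" and "n \<ge> 1" and "j \<ge> 1"
  shows "rcf_interm_conv x (Suc n) j =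
           1 / (real (rcf_digit x 1) + rcf_interm_conv (gauss_map x) n j)"
proof -
  define z where "z = gauss_map x"
  define d where "d = rcf_digit x 1"
  define A where "A = rcfQ z (n - 1) + int j * rcfQ z n"
  define B where "B = rcfP z (n - 1) + int j * rcfP z n"
  have z: "unit_irrational z" unfolding z_def using x by (rule unit_irrational_gauss_map)
  have "int j * rcfQ z n \<ge> 1"
    using rcfQ_bounds(2)[OF z \<open>n \<ge> 1\<close>] \<open>j \<ge> 1\<close>
      order_trans[OF _ mult_right_mono[of 1 "int j"]] by simp
  then have "A \<noteq> 0" using rcfQ_bounds(1)[OF z, of "n - 1"] unfolding A_def by linarith
  have "Suc (n - 1) = n" using \<open>n \<ge> 1\<close> by simp
  then have "rcf_interm_conv x (Suc n) j = real_of_int A / (real d * real_of_int A + real_of_int B)"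
    using rcfP_rcfQ_gauss_map[of x n] rcfP_rcfQ_gauss_map[of x "n - 1"]
    unfolding rcf_interm_conv_def A_def B_def z_def d_def by (simp add: algebra_simps)
  also have "\<dots> = 1 / (real d + real_of_int B / real_of_int A)"
    using \<open>A \<noteq> 0\<close> by (simp add: field_simps)
  finally show ?thesis
    unfolding rcf_interm_conv_def A_def B_def z_def d_def .
qed

lemma rcf_interm_conv_pos:
  assumes "unit_irrational x" and "n \<ge> 1" and "j \<ge> 1"
  shows "rcf_interm_conv x n j > 0"
  using \<open>n \<ge> 1\<close> \<open>unit_irrational x\<close>
proof (induction n arbitrary: x rule: nat_induct_at_least)
  case (Suc n)
  have "rcf_interm_conv (gauss_map x) n j > 0"
    using Suc unit_irrational_gauss_map by blast
  then show ?case
    using rcf_interm_conv_Suc[OF Suc.prems Suc.hyps \<open>j \<ge> 1\<close>] by simp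
qed (use \<open>j \<ge> 1\<close> in \<open>simp add: rcf_interm_conv_def\<close>)

lemma is_rcf_interm_conv_pos:
  "unit_irrational x \<Longrightarrow> is_rcf_interm_conv x t \<Longrightarrow> t > 0"
  unfolding is_rcf_interm_conv_def using rcf_interm_conv_pos by blast

lemma is_rcf_interm_conv_1:
  assumes "unit_irrational x" shows "is_rcf_interm_conv x 1"
proof -
  have "1 \<le> rcf_digit x 1" using rcf_digit_ge_1[OF assms] by simp
  moreover have "1 = rcf_interm_conv x 1 1" by (simp add: rcf_interm_conv_def)
  ultimately show ?thesis unfolding is_rcf_interm_conv_def by (intro exI[of _ 1] conjI) auto
qed

lemma is_rcf_interm_conv_prepend:
  assumes z: "unit_irrational z" and m: "m \<ge> 1" and t: "is_rcf_interm_conv z t"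
  shows "is_rcf_interm_conv (1 / (real m + z)) (1 / (real m + t))"
proof -
  define x where "x = 1 / (real m + z)"
  note x = unit_irrational_prepend[OF z m, folded x_def]
  obtain n j where n: "n \<ge> 1" and j: "1 \<le> j" "j \<le> rcf_digit z n"
    and t_eq: "t = rcf_interm_conv z n j"
    using t unfolding is_rcf_interm_conv_def by blast
  have "1 / (real m + t) = rcf_interm_conv x (Suc n) j"
    using rcf_interm_conv_Suc[OF x(1) n j(1)] x t_eq by simp
  moreover have "rcf_digit x (Suc n) = rcf_digit z n"
    using rcf_digit_Suc[OF n] x by simp
  ultimately show ?thesis
    unfolding is_rcf_interm_conv_def x_def[symmetric] using j by (intro exI[of _ "Suc n"]) auto
qed

lemma unit_irrational_add_first_digit:
  assumes y: "unit_irrational y"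
  shows "unit_irrational (1 / (real m + 1 / y))"
    and "gauss_map (1 / (real m + 1 / y)) = gauss_map y"
    and "rcf_digit (1 / (real m + 1 / y)) 1 = m + rcf_digit y 1"
proof -
  have eq: "1 / (real m + 1 / y) = 1 / (real (m + rcf_digit y 1) + gauss_map y)"
    using rcf_digit_1_decomp[OF y] by simp
  have "m + rcf_digit y 1 \<ge> 1" using rcf_digit_ge_1[OF y, of 1] by simp
  note prepend = unit_irrational_prepend[OF unit_irrational_gauss_map[OF y] this]
  show "unit_irrational (1 / (real m + 1 / y))" unfolding eq by (fact prepend(1))
  show "gauss_map (1 / (real m + 1 / y)) = gauss_map y" unfolding eq by (fact prepend(2))
  show "rcf_digit (1 / (real m + 1 / y)) 1 = m + rcf_digit y 1" unfolding eq by (fact prepend(3))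
qed

lemma is_rcf_interm_conv_add_first_digit:
  assumes y: "unit_irrational y" and t: "is_rcf_interm_conv y t"
  shows "is_rcf_interm_conv (1 / (real m + 1 / y)) (1 / (real m + 1 / t))"
proof -
  define x where "x = 1 / (real m + 1 / y)"
  note x = unit_irrational_add_first_digit[OF y, of m, folded x_def]
  obtain n j where n: "n \<ge> 1" and j: "1 \<le> j" "j \<le> rcf_digit y n"
    and t_eq: "t = rcf_interm_conv y n j"
    using t unfolding is_rcf_interm_conv_def by blast
  show ?thesis
  proof (cases "n = 1")
    case True
    then have "1 / (real m + 1 / t) = rcf_interm_conv x 1 (m + j)"
      using t_eq by (simp add: rcf_interm_conv_def)
    moreover have "1 \<le> m + j" "m + j \<le> rcf_digit x 1"
      using True j x(3) by simp_all
    ultimately show ?thesis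
      unfolding is_rcf_interm_conv_def x_def[symmetric]
      by (intro exI[of _ 1] conjI exI[of _ "m + j"]) simp_all
  next
    case False
    then obtain n' where n': "n = Suc n'" "n' \<ge> 1" using n by (cases n) auto
    have "1 / t = real (rcf_digit y 1) + rcf_interm_conv (gauss_map y) n' j"
      using rcf_interm_conv_Suc[OF y n'(2) j(1)] t_eq n'(1) by simp
    then have "1 / (real m + 1 / t) = rcf_interm_conv x n j"
      using rcf_interm_conv_Suc[OF x(1) n'(2) j(1)] x n'(1) by simp
    moreover have "rcf_digit x n = rcf_digit y n"
      using rcf_digit_Suc[OF n'(2), of x] rcf_digit_Suc[OF n'(2), of y] x n'(1) by simp
    ultimately show ?thesis
      unfolding is_rcf_interm_conv_def x_def[symmetric] using n j
      by (intro exI[of _ n] conjI exI[of _ j]) simp_all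
  qed
qed

section \<open>Inverse branches of the OOCF map\<close>

definition oocf_branch :: "nat \<Rightarrow> int \<Rightarrow> real \<Rightarrow> real" where
  "oocf_branch a e t = 1 - 1 / (real a + real_of_int e / (1 + t))"

lemma oocf_branch_in_Rats: "t \<in> \<rat> \<Longrightarrow> oocf_branch a e t \<in> \<rat>"
  unfolding oocf_branch_def by (simp add: Rats_divide)

lemma oocf_branch_1_plus: "t > 0 \<Longrightarrow> oocf_branch 1 1 t = 1 / (2 + t)"
  unfolding oocf_branch_def by (simp add: field_simps)

lemma one_minus_inverse_add_1: "q > 0 \<Longrightarrow> 1 - 1 / (q + 1) = 1 / (1 + 1 / (q :: real))"
  by (simp add: field_simps)

lemma oocf_branch_plus:
  assumes "a \<ge> 2" and "t > 0"
  shows "oocf_branch a 1 t = 1 / (1 + 1 / (real (a - 1) + 1 / (1 + t)))"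
proof -
  have eq: "real a + real_of_int 1 / (1 + t) = (real (a - 1) + 1 / (1 + t)) + 1"
    using assms(1) by (simp add: of_nat_diff)
  have "real (a - 1) + 1 / (1 + t) > 0" using assms by (intro add_nonneg_pos) simp_all
  then show ?thesis
    unfolding oocf_branch_def eq by (rule one_minus_inverse_add_1)
qed

lemma oocf_branch_2_minus: "t > 0 \<Longrightarrow> oocf_branch 2 (-1) t = 1 / (2 + 1 / t)"
  unfolding oocf_branch_def by (simp add: field_simps)

lemma oocf_branch_minus:
  assumes "a \<ge> 3" and "t > 0"
  shows "oocf_branch a (-1) t = 1 / (1 + 1 / (real (a - 2) + 1 / (1 + 1 / t)))"
proof -
  have "1 / (1 + 1 / t) = 1 - 1 / (1 + t)" using assms(2) by (simp add: field_simps)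
  then have eq: "real a + real_of_int (-1) / (1 + t) = (real (a - 2) + 1 / (1 + 1 / t)) + 1"
    using assms(1) by (simp add: of_nat_diff)
  have "real (a - 2) + 1 / (1 + 1 / t) > 0"
    using assms by (intro add_nonneg_pos) (simp_all add: add_pos_pos)
  then show ?thesis
    unfolding oocf_branch_def eq by (rule one_minus_inverse_add_1)
qed

lemma is_rcf_interm_conv_oocf_branch:
  assumes y: "unit_irrational y" and ae: "(a, e) \<in> oocf_D" and t: "is_rcf_interm_conv y t"
  shows "is_rcf_interm_conv (oocf_branch a e y) (oocf_branch a e t)"
proof -
  have "y > 0" using y by (simp add: unit_irrational_def)
  have "t > 0" using is_rcf_interm_conv_pos[OF y t] .
  note prepend_1 = is_rcf_interm_conv_prepend[of _ 1, simplified]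
  consider "a = 1" "e = 1" | "a \<ge> 2" "e = 1" | "a = 2" "e = -1" | "a \<ge> 3" "e = -1"
    using ae unfolding oocf_D_def by fastforce
  then show ?thesis
  proof cases
    case 1
    show ?thesis
      unfolding 1 oocf_branch_1_plus[OF \<open>y > 0\<close>] oocf_branch_1_plus[OF \<open>t > 0\<close>]
      using is_rcf_interm_conv_prepend[OF y _ t, of 2] by simp
  next
    case 2
    define m where "m = a - 1"
    define v where "v = 1 / (1 + y)"
    have m: "m \<ge> 1" using 2 by (simp add: m_def)
    have v: "unit_irrational v" using unit_irrational_prepend(1)[OF y, of 1] by (simp add: v_def)
    have "is_rcf_interm_conv v (1 / (1 + t))"
      using prepend_1[OF y t] by (simp add: v_def)
    then have "is_rcf_interm_conv (1 / (real m + v)) (1 / (real m + 1 / (1 + t)))"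
      using is_rcf_interm_conv_prepend[OF v m] by blast
    then have "is_rcf_interm_conv (1 / (1 + 1 / (real m + v)))
        (1 / (1 + 1 / (real m + 1 / (1 + t))))"
      using prepend_1 unit_irrational_prepend(1)[OF v m] by blast
    then show ?thesis
      using 2 by (simp add: oocf_branch_plus \<open>y > 0\<close> \<open>t > 0\<close> m_def v_def)
  next
    case 3
    then show ?thesis
      using is_rcf_interm_conv_add_first_digit[OF y t, of 2]
      by (simp add: oocf_branch_2_minus \<open>y > 0\<close> \<open>t > 0\<close>)
  next
    case 4
    define m where "m = a - 2"
    define v where "v = 1 / (1 + 1 / y)"
    have m: "m \<ge> 1" using 4 by (simp add: m_def)
    have v: "unit_irrational v"
      using unit_irrational_add_first_digit(1)[OF y, of 1] by (simp add: v_def)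
    have "is_rcf_interm_conv v (1 / (1 + 1 / t))"
      using is_rcf_interm_conv_add_first_digit[OF y t, of 1] by (simp add: v_def)
    then have "is_rcf_interm_conv (1 / (real m + v)) (1 / (real m + 1 / (1 + 1 / t)))"
      using is_rcf_interm_conv_prepend[OF v m] by blast
    then have "is_rcf_interm_conv (1 / (1 + 1 / (real m + v)))
        (1 / (1 + 1 / (real m + 1 / (1 + 1 / t))))"
      using prepend_1 unit_irrational_prepend(1)[OF v m] by blast
    then show ?thesis
      using 4 by (simp add: oocf_branch_minus \<open>y > 0\<close> \<open>t > 0\<close> m_def v_def)
  qed
qed

section \<open>The OOCF map on irrational numbers\<close>

lemma oocf_B_plus: "a \<ge> 1 \<Longrightarrow> oocf_B a 1 = {1 - 1 / (real a + 1/2) .. 1 - 1 / (real a + 1)}"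
  unfolding oocf_B_def Let_def by (simp add: field_simps)

lemma oocf_B_minus: "a \<ge> 2 \<Longrightarrow> oocf_B a (-1) = {1 - 1 / (real a - 1) .. 1 - 1 / (real a - 1/2)}"
  unfolding oocf_B_def Let_def by (simp add: field_simps)

lemma mem_one_minus_inverse_interval_iff:
  fixes x \<alpha> \<beta> :: real
  assumes x: "0 < x" "x < 1" "x \<notin> \<rat>" and "\<alpha> \<in> \<rat>" "\<beta> \<in> \<rat>" "\<alpha> > 0" "\<beta> > 0"
  shows "x \<in> {1 - 1 / \<alpha> .. 1 - 1 / \<beta>} \<longleftrightarrow> \<alpha> < 1 / (1 - x) \<and> 1 / (1 - x) < \<beta>"
proof -
  have "1 - 1 / \<alpha> \<noteq> x" "x \<noteq> 1 - 1 / \<beta>"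
    using assms by (auto simp: Rats_diff Rats_divide)
  then have "x \<in> {1 - 1 / \<alpha> .. 1 - 1 / \<beta>} \<longleftrightarrow> 1 - x < 1 / \<alpha> \<and> 1 / \<beta> < 1 - x"
    by auto
  also have "\<dots> \<longleftrightarrow> \<alpha> < 1 / (1 - x) \<and> 1 / (1 - x) < \<beta>"
    using assms by (simp add: pos_less_divide_eq pos_divide_less_eq mult.commute)
  finally show ?thesis .
qed

lemma half_interval_iff:
  fixes u :: real
  assumes "u > 1" and "frac u \<noteq> 0" and "frac u \<noteq> 1/2"
  shows "(e = 1 \<and> a \<ge> 1 \<and> real a + 1/2 < u \<and> u < real a + 1) \<or>
         (e = -1 \<and> a \<ge> 2 \<and> real a - 1 < u \<and> u < real a - 1/2) \<longleftrightarrow>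
         (a, e) = (if frac u > 1/2 then (nat \<lfloor>u\<rfloor>, 1) else (nat \<lfloor>u\<rfloor> + 1, -1))"
    (is "?cyl \<longleftrightarrow> _")
proof -
  have floor_u: "real_of_int \<lfloor>u\<rfloor> \<le> u" "u < real_of_int \<lfloor>u\<rfloor> + 1" "\<lfloor>u\<rfloor> \<ge> 1"
    using \<open>u > 1\<close> by linarith+
  then have nat_floor_u: "real (nat \<lfloor>u\<rfloor>) = real_of_int \<lfloor>u\<rfloor>" "nat \<lfloor>u\<rfloor> \<ge> 1"
    by linarith+
  have "frac u > 0" using assms(2) frac_ge_0[of u] by linarith
  show ?thesis
  proof
    assume ?cyl
    then show "(a, e) = (if frac u > 1/2 then (nat \<lfloor>u\<rfloor>, 1) else (nat \<lfloor>u\<rfloor> + 1, -1))"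
    proof (elim disjE conjE)
      assume "e = 1" "a \<ge> 1" "real a + 1/2 < u" "u < real a + 1"
      moreover from this have "\<lfloor>u\<rfloor> = int a" by (simp add: floor_eq_iff)
      ultimately show ?thesis by (simp add: frac_def)
    next
      assume "e = -1" "a \<ge> 2" "real a - 1 < u" "u < real a - 1/2"
      moreover from this have "\<lfloor>u\<rfloor> = int a - 1" by (simp add: floor_eq_iff)
      ultimately show ?thesis by (simp add: frac_def)
    qed
  next
    assume a_e: "(a, e) = (if frac u > 1/2 then (nat \<lfloor>u\<rfloor>, 1) else (nat \<lfloor>u\<rfloor> + 1, -1))"
    show ?cyl
    proof (cases "frac u > 1/2")
      case True
      then show ?thesis using a_e floor_u nat_floor_u by (simp add: frac_def)
    next
      case False
      then show ?thesis
        using a_e floor_u nat_floor_u \<open>frac u > 0\<close> assms(3) by (simp add: frac_def)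
    qed
  qed
qed

text \<open>The substitution u = 1/(1 - x) maps B(a,1) onto [a + 1/2, a + 1] and B(a,-1) onto
  [a - 1, a - 1/2].\<close>

definition oocf_first_digit :: "real \<Rightarrow> nat \<times> int" where
  "oocf_first_digit x =
     (let u = 1 / (1 - x) in if frac u > 1/2 then (nat \<lfloor>u\<rfloor>, 1) else (nat \<lfloor>u\<rfloor> + 1, -1))"

lemma oocf_cylinder_bounds_iff:
  assumes x: "unit_irrational x"
  defines "u \<equiv> 1 / (1 - x)"
  shows "(a, e) \<in> oocf_D \<and> x \<in> oocf_B a e \<longleftrightarrow>
      (e = 1 \<and> a \<ge> 1 \<and> real a + 1/2 < u \<and> u < real a + 1) \<or>
      (e = -1 \<and> a \<ge> 2 \<and> real a - 1 < u \<and> u < real a - 1/2)"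
proof -
  have x01: "0 < x" "x < 1" "x \<notin> \<rat>" using x by (auto simp: unit_irrational_def)
  have plus: "x \<in> oocf_B a 1 \<longleftrightarrow> real a + 1/2 < u \<and> u < real a + 1" if "a \<ge> 1"
    using mem_one_minus_inverse_interval_iff[OF x01, of "real a + 1/2" "real a + 1"] that
    by (simp add: oocf_B_plus u_def)
  have minus: "x \<in> oocf_B a (-1) \<longleftrightarrow> real a - 1 < u \<and> u < real a - 1/2" if "a \<ge> 2"
    using mem_one_minus_inverse_interval_iff[OF x01, of "real a - 1" "real a - 1/2"] that
    by (simp add: oocf_B_minus u_def)
  have "(a, e) \<in> oocf_D \<longleftrightarrow> (e = 1 \<and> a \<ge> 1) \<or> (e = -1 \<and> a \<ge> 2)"
    unfolding oocf_D_def by auto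
  then show ?thesis using plus minus by auto
qed

lemma oocf_cylinder_iff:
  assumes x: "unit_irrational x"
  shows "(a, e) \<in> oocf_D \<and> x \<in> oocf_B a e \<longleftrightarrow> (a, e) = oocf_first_digit x"
proof -
  define u where "u = 1 / (1 - x)"
  have x01: "0 < x" "x < 1" "x \<notin> \<rat>" using x by (auto simp: unit_irrational_def)
  have "u > 1" using x01 by (simp add: u_def)
  have "u \<notin> \<rat>" using x01 by (simp add: u_def Rats_diff_iff divide_inverse)
  then have frac_u: "frac u \<noteq> 0" "frac u \<noteq> 1/2"
    by (metis Rats_number_of Rats_divide Rats_1 frac_in_Rats_iff Rats_0)+
  have "(a, e) \<in> oocf_D \<and> x \<in> oocf_B a e \<longleftrightarrow>
      (e = 1 \<and> a \<ge> 1 \<and> real a + 1/2 < u \<and> u < real a + 1) \<or>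
      (e = -1 \<and> a \<ge> 2 \<and> real a - 1 < u \<and> u < real a - 1/2)"
    unfolding u_def by (rule oocf_cylinder_bounds_iff[OF x])
  also have "\<dots> \<longleftrightarrow>
      (a, e) = (if frac u > 1/2 then (nat \<lfloor>u\<rfloor>, 1) else (nat \<lfloor>u\<rfloor> + 1, -1))"
    by (rule half_interval_iff[OF \<open>u > 1\<close> frac_u])
  also have "\<dots> \<longleftrightarrow> (a, e) = oocf_first_digit x"
    unfolding oocf_first_digit_def Let_def u_def ..
  finally show ?thesis .
qed

lemma oocf_digit_1: "unit_irrational x \<Longrightarrow> oocf_digit x 1 = oocf_first_digit x"
  unfolding oocf_digit_def using oocf_cylinder_iff[of x "fst d" "snd d" for d]
  by (intro the_equality) auto

lemma oocf_digit_1_in_D: "unit_irrational x \<Longrightarrow> oocf_digit x 1 \<in> oocf_D"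
  using oocf_cylinder_iff[of x "fst (oocf_digit x 1)" "snd (oocf_digit x 1)"] oocf_digit_1[of x]
  by simp

lemma oocf_T_eq:
  assumes x: "unit_irrational x" and d: "oocf_digit x 1 = (a, e)"
  shows "oocf_T x =
     (if e = -1 then (let k = real a - 1 in (k * x - (k - 1)) / (k - (k + 1) * x))
      else (let k = real a in (k - (k + 1) * x) / (k * x - (k - 1))))"
proof -
  have "(SOME (a, e). (a, e) \<in> oocf_D \<and> x \<in> oocf_B a e) = (a, e)"
    using oocf_cylinder_iff[OF x] d oocf_digit_1[OF x] by (intro some_equality) auto
  moreover have "x \<noteq> 1" using x by (simp add: unit_irrational_def)
  ultimately show ?thesis unfolding oocf_T_def by simp
qed

lemma moebius_one_minus_inverse:
  fixes u k :: real
  assumes "u > 0" and "u \<noteq> k" and "u \<noteq> k + 1"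
  shows "(k - (k + 1) * (1 - 1 / u)) / (k * (1 - 1 / u) - (k - 1)) = (k + 1 - u) / (u - k)"
    and "(k * (1 - 1 / u) - (k - 1)) / (k - (k + 1) * (1 - 1 / u)) = (u - k) / (k + 1 - u)"
proof -
  have num: "k - (k + 1) * (1 - 1 / u) = (k + 1 - u) / u" using assms by (simp add: field_simps)
  have den: "k * (1 - 1 / u) - (k - 1) = (u - k) / u" using assms by (simp add: field_simps)
  show "(k - (k + 1) * (1 - 1 / u)) / (k * (1 - 1 / u) - (k - 1)) = (k + 1 - u) / (u - k)"
    and "(k * (1 - 1 / u) - (k - 1)) / (k - (k + 1) * (1 - 1 / u)) = (u - k) / (k + 1 - u)"
    unfolding num den using assms by simp_all
qed

lemma oocf_T_inverse_branch:
  assumes x: "unit_irrational x" and d: "oocf_digit x 1 = (a, e)"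
  shows "unit_irrational (oocf_T x)" and "x = oocf_branch a e (oocf_T x)"
proof -
  define u where "u = 1 / (1 - x)"
  have x01: "0 < x" "x < 1" "x \<notin> \<rat>" using x by (auto simp: unit_irrational_def)
  have x_eq: "x = 1 - 1 / u" and "u > 0" using x01 by (simp_all add: u_def)
  have "(a, e) \<in> oocf_D \<and> x \<in> oocf_B a e"
    using oocf_cylinder_iff[OF x] oocf_digit_1[OF x] d by simp
  then consider "e = 1" "real a + 1/2 < u" "u < real a + 1"
    | "e = -1" "real a - 1 < u" "u < real a - 1/2"
    unfolding oocf_cylinder_bounds_iff[OF x] u_def by blast
  then have "0 < oocf_T x \<and> oocf_T x < 1 \<and> x = oocf_branch a e (oocf_T x)"
  proof cases
    case 1
    have T: "oocf_T x = (real a + 1 - u) / (u - real a)"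
      using oocf_T_eq[OF x d] moebius_one_minus_inverse(1)[OF \<open>u > 0\<close>, of "real a"] 1
      unfolding x_eq by (simp add: Let_def)
    have "1 + oocf_T x = 1 / (u - real a)" using 1 unfolding T by (simp add: field_simps)
    then have "oocf_branch a e (oocf_T x) = x"
      using 1 by (simp add: oocf_branch_def x_eq)
    moreover have "0 < oocf_T x" "oocf_T x < 1" using 1 unfolding T by simp_all
    ultimately show ?thesis by simp
  next
    case 2
    define k where "k = real a - 1"
    have "oocf_T x = (k * x - (k - 1)) / (k - (k + 1) * x)"
      using oocf_T_eq[OF x d] 2 unfolding Let_def k_def[symmetric] by simp
    also have "\<dots> = (u - k) / (k + 1 - u)"
      unfolding x_eq using 2 \<open>u > 0\<close>
      by (intro moebius_one_minus_inverse(2)) (simp_all add: k_def)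
    finally have T: "oocf_T x = (u - real a + 1) / (real a - u)" by (simp add: k_def)
    have "1 + oocf_T x = 1 / (real a - u)" using 2 unfolding T by (simp add: field_simps)
    then have "oocf_branch a e (oocf_T x) = x"
      using 2 by (simp add: oocf_branch_def x_eq)
    moreover have "0 < oocf_T x" "oocf_T x < 1" using 2 unfolding T by simp_all
    ultimately show ?thesis by simp
  qed
  moreover from this have "oocf_T x \<notin> \<rat>" using x01(3) oocf_branch_in_Rats by metis
  ultimately show "unit_irrational (oocf_T x)" and "x = oocf_branch a e (oocf_T x)"
    by (simp_all add: unit_irrational_def)
qed

section \<open>OOCF convergents\<close>

lemma oocf_digit_Suc: "m \<ge> 1 \<Longrightarrow> oocf_digit x (Suc m) = oocf_digit (oocf_T x) m"
  unfolding oocf_digit_def by (cases m) (simp_all add: funpow_Suc_right del: funpow.simps)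

lemma oocf_tail_Suc: "m \<ge> 1 \<Longrightarrow> oocf_tail x (Suc m) r = oocf_tail (oocf_T x) m r"
  by (induction r arbitrary: m) (simp_all add: oocf_digit_Suc)

lemma oocf_conv_1: "oocf_digit x 1 = (a, e) \<Longrightarrow> oocf_conv x 1 = oocf_branch a e 1"
  by (simp add: oocf_conv_def oocf_branch_def)

lemma oocf_conv_Suc:
  assumes "oocf_digit x 1 = (a, e)" and "k \<ge> 1"
  shows "oocf_conv x (Suc k) = oocf_branch a e (oocf_conv (oocf_T x) k)"
proof -
  obtain r where k: "k = Suc r" using \<open>k \<ge> 1\<close> by (cases k) auto
  have "oocf_tail x 2 r = oocf_tail (oocf_T x) 1 r"
    using oocf_tail_Suc[of 1 x r] by (simp add: numeral_2_eq_2)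
  moreover have "(2::real) - q = 1 + (1 - q)" for q by simp
  ultimately show ?thesis
    using assms(1) unfolding k oocf_conv_def oocf_branch_def by (simp add: numeral_2_eq_2)
qed

lemma is_rcf_interm_conv_oocf_conv:
  assumes "unit_irrational x" and "k \<ge> 1"
  shows "is_rcf_interm_conv x (oocf_conv x k)"
  using \<open>k \<ge> 1\<close> \<open>unit_irrational x\<close>
proof (induction k arbitrary: x rule: nat_induct_at_least)
  case base
  obtain a e where d: "oocf_digit x 1 = (a, e)" by fastforce
  note T = oocf_T_inverse_branch[OF base d]
  have "(a, e) \<in> oocf_D" using oocf_digit_1_in_D[OF base] d by simp
  from is_rcf_interm_conv_oocf_branch[OF T(1) this is_rcf_interm_conv_1[OF T(1)]]
  show ?case using T(2) oocf_conv_1[OF d] by (simp add: One_nat_def)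
next
  case (Suc k)
  obtain a e where d: "oocf_digit x 1 = (a, e)" by fastforce
  note T = oocf_T_inverse_branch[OF Suc.prems d]
  have "(a, e) \<in> oocf_D" using oocf_digit_1_in_D[OF Suc.prems] d by simp
  from is_rcf_interm_conv_oocf_branch[OF T(1) this Suc.IH[OF T(1)]]
  show ?case using T(2) oocf_conv_Suc[OF d Suc.hyps] by simp
qed

theorem theorem5p2:
  fixes x :: real and k :: nat
  assumes "0 < x" and "x < 1" and "x \<notin> \<rat>" and "k \<ge> 1"
  shows "\<exists>n\<ge>1. \<exists>j::nat. 1 \<le> j \<and> j \<le> rcf_digit x n \<and>
           oocf_conv x k =
             real_of_int (rcfP x (n - 1) + int j * rcfP x n) /
             real_of_int (rcfQ x (n - 1) + int j * rcfQ x n)"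
  using is_rcf_interm_conv_oocf_conv[of x k] assms
  unfolding is_rcf_interm_conv_def rcf_interm_conv_def unit_irrational_def by blast

end
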